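(* Let $(V,\star,\alpha,1)$ be a unital hom-associative algebra of type $I_3$. Then it is also (a) of type $I_2$, (b) of type $II_2$, and (c) of type $II_3$.
   Context: Let $k$ be a commutative ring. A unital hom-associative algebra is a tuple $(V,\star,\alpha,1)$ where $V$ is a $k$-module, $\star:V\times V\to V$ is $k$-bilinear, $\alpha:V\to V$ is $k$-linear, and $1\in V$ satisfies $1\star x=x\star 1=x$ for all $x\in V$. It is of type $T$ if the identity for $T$ holds for all $x,y,z\in V$: $I_2$: $x\star(\alpha(y)\star z)=(x\star\alpha(y))\star z$; $I_3$: $x\star(y\star\alpha(z))=(\alpha(x)\star y)\star z$; $II_2$: $\alpha(x)\star(y\star\alpha(z))=(\alpha(x)\star y)\star\alpha(z)$; $II_3$: $\alpha(x)\star(\alpha(y)\star z)=(x\star\alpha(y))\star\alpha(z)$. *)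

theory Defs
  imports Main "HOL.Modules"
begin

definition unital_hom_assoc_algebra ::
  "('k::comm_ring_1 \<Rightarrow> 'v::ab_group_add \<Rightarrow> 'v) \<Rightarrow> ('v \<Rightarrow> 'v \<Rightarrow> 'v) \<Rightarrow> ('v \<Rightarrow> 'v) \<Rightarrow> 'v \<Rightarrow> bool"
where
  "unital_hom_assoc_algebra scale mult alpha one \<longleftrightarrow>
     module scale \<and>
     (\<forall>y. module_hom scale scale (\<lambda>x. mult x y)) \<and>
     (\<forall>x. module_hom scale scale (\<lambda>y. mult x y)) \<and>
     module_hom scale scale alpha \<and>
     (\<forall>x. mult one x = x \<and> mult x one = x)"

definition type_I2 :: "('v \<Rightarrow> 'v \<Rightarrow> 'v) \<Rightarrow> ('v \<Rightarrow> 'v) \<Rightarrow> bool" where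
  "type_I2 mult alpha \<longleftrightarrow>
     (\<forall>x y z. mult x (mult (alpha y) z) = mult (mult x (alpha y)) z)"

definition type_I3 :: "('v \<Rightarrow> 'v \<Rightarrow> 'v) \<Rightarrow> ('v \<Rightarrow> 'v) \<Rightarrow> bool" where
  "type_I3 mult alpha \<longleftrightarrow>
     (\<forall>x y z. mult x (mult y (alpha z)) = mult (mult (alpha x) y) z)"

definition type_II2 :: "('v \<Rightarrow> 'v \<Rightarrow> 'v) \<Rightarrow> ('v \<Rightarrow> 'v) \<Rightarrow> bool" where
  "type_II2 mult alpha \<longleftrightarrow>
     (\<forall>x y z. mult (alpha x) (mult y (alpha z)) = mult (mult (alpha x) y) (alpha z))"

definition type_II3 :: "('v \<Rightarrow> 'v \<Rightarrow> 'v) \<Rightarrow> ('v \<Rightarrow> 'v) \<Rightarrow> bool" where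
  "type_II3 mult alpha \<longleftrightarrow>
     (\<forall>x y z. mult (alpha x) (mult (alpha y) z) = mult (mult x (alpha y)) (alpha z))"

end

theory Submission
  imports Defs
begin

text \<open>
  Only the unit laws and the identity I3,
  x(y(\<alpha>z)) = ((\<alpha>x)y)z, are used.  Putting y = 1 in I3
  gives the swap law x(\<alpha>z) = (\<alpha>x)z, and putting also x = 1 shows that \<alpha> is
  left multiplication by c = \<alpha>(1).  Type I2 then follows from the swap law and I3.
  Applying I2 with first factor c shows \<alpha>((\<alpha>x)y) = (\<alpha>(\<alpha>x))y, which together with
  the swap law and I3 yields type II2; finally II3 is II2 rewritten by the swap law.
\<close>

locale unital_I3 =
  fixes mult :: "'v \<Rightarrow> 'v \<Rightarrow> 'v" (infixl "\<star>" 70)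
    and alpha :: "'v \<Rightarrow> 'v" and one :: 'v
  assumes left_unit: "one \<star> x = x"
    and right_unit: "x \<star> one = x"
    and I3: "x \<star> (y \<star> alpha z) = (alpha x \<star> y) \<star> z"
begin

lemma alpha_swap: "x \<star> alpha z = alpha x \<star> z"
  using I3[of x one z] by (simp add: left_unit right_unit)

lemma alpha_eq_left_mult: "alpha z = alpha one \<star> z"
  using alpha_swap[of one z] by (simp add: left_unit)

lemma I2: "x \<star> (alpha y \<star> z) = (x \<star> alpha y) \<star> z"
proof -
  have "x \<star> (alpha y \<star> z) = x \<star> (y \<star> alpha z)" by (simp add: alpha_swap)
  also have "\<dots> = (alpha x \<star> y) \<star> z" by (rule I3)
  also have "\<dots> = (x \<star> alpha y) \<star> z" by (simp add: alpha_swap)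
  finally show ?thesis .
qed

lemma alpha_of_alpha_left: "alpha (alpha x \<star> y) = alpha (alpha x) \<star> y"
proof -
  have "alpha (alpha x \<star> y) = alpha one \<star> (alpha x \<star> y)" by (rule alpha_eq_left_mult)
  also have "\<dots> = (alpha one \<star> alpha x) \<star> y" by (rule I2)
  also have "\<dots> = alpha (alpha x) \<star> y" by (simp flip: alpha_eq_left_mult)
  finally show ?thesis .
qed

lemma II2: "alpha x \<star> (y \<star> alpha z) = (alpha x \<star> y) \<star> alpha z"
proof -
  have "alpha x \<star> (y \<star> alpha z) = (alpha (alpha x) \<star> y) \<star> z" by (rule I3)
  also have "\<dots> = alpha (alpha x \<star> y) \<star> z" by (simp add: alpha_of_alpha_left)
  also have "\<dots> = (alpha x \<star> y) \<star> alpha z" by (simp add: alpha_swap)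
  finally show ?thesis .
qed

lemma II3: "alpha x \<star> (alpha y \<star> z) = (x \<star> alpha y) \<star> alpha z"
  using II2[of x y z] by (simp add: alpha_swap)

end

theorem proposition2p6:
  fixes scale :: "'k::comm_ring_1 \<Rightarrow> 'v::ab_group_add \<Rightarrow> 'v"
    and mult :: "'v \<Rightarrow> 'v \<Rightarrow> 'v" and alpha :: "'v \<Rightarrow> 'v" and one :: 'v
  assumes "unital_hom_assoc_algebra scale mult alpha one"
    and "type_I3 mult alpha"
  shows "type_I2 mult alpha \<and> type_II2 mult alpha \<and> type_II3 mult alpha"
proof -
  interpret unital_I3 mult alpha one
    using assms unfolding unital_hom_assoc_algebra_def type_I3_def
    by unfold_locales blast+
  show ?thesis
    unfolding type_I2_def type_II2_def type_II3_def using I2 II2 II3 by blast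
qed

end
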